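(* Every $K$-algebra endomorphism of $\mathbb{S}_1$ is either injective or its image is a commutative finite-dimensional algebra. Moreover, for every positive integer $d$ there is an endomorphism of $\mathbb{S}_1$ whose image has dimension exactly $d$.
   Context: $K$ is a field of characteristic zero and $\mathbb{S}_1=K\langle x,y\mid yx=1\rangle$ is the $K$-algebra generated by $x,y$ with the single defining relation $yx=1$. *)

theory Defs
  imports Main
begin

text \<open>The monoid with presentation
  <x,y | yx = 1> (the bicyclic monoid) has normal forms x^i y^j, encoded as pairs (i,j),
  with product (x^i y^j)(x^k y^l) = x^(i + (k - j)) y^(l + (j - k)) (truncated subtraction).
  S_1 is its monoid algebra: finitely supported functions nat \<times> nat \<Rightarrow> K.\<close>

definition bmul :: "nat \<times> nat \<Rightarrow> nat \<times> nat \<Rightarrow> nat \<times> nat" where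
  "bmul p q = (fst p + (fst q - snd p), snd q + (snd p - fst q))"

type_synonym 'k s1elt = "nat \<times> nat \<Rightarrow> 'k"

definition supp1 :: "'k::zero s1elt \<Rightarrow> (nat \<times> nat) set" where
  "supp1 f = {p. f p \<noteq> 0}"

definition S1 :: "'k::field s1elt set" where
  "S1 = {f. finite (supp1 f)}"

definition s1_mult :: "'k::field s1elt \<Rightarrow> 'k s1elt \<Rightarrow> 'k s1elt" where
  "s1_mult f g = (\<lambda>r. \<Sum>p\<in>supp1 f. \<Sum>q\<in>supp1 g. if bmul p q = r then f p * g q else 0)"

definition s1_one :: "'k::field s1elt" where
  "s1_one = (\<lambda>p. if p = (0,0) then 1 else 0)"

definition s1_x :: "'k::field s1elt" where
  "s1_x = (\<lambda>p. if p = (1,0) then 1 else 0)"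

definition s1_y :: "'k::field s1elt" where
  "s1_y = (\<lambda>p. if p = (0,1) then 1 else 0)"

definition s1_add :: "'k::field s1elt \<Rightarrow> 'k s1elt \<Rightarrow> 'k s1elt" where
  "s1_add f g = (\<lambda>p. f p + g p)"

definition s1_zero :: "'k::field s1elt" where
  "s1_zero = (\<lambda>p. 0)"

definition s1_scale :: "'k::field \<Rightarrow> 'k s1elt \<Rightarrow> 'k s1elt" where
  "s1_scale c f = (\<lambda>p. c * f p)"

definition s1_endo :: "('k::field s1elt \<Rightarrow> 'k s1elt) \<Rightarrow> bool" where
  "s1_endo \<phi> \<longleftrightarrow> \<phi> ` S1 \<subseteq> S1
     \<and> (\<forall>f\<in>S1. \<forall>g\<in>S1. \<phi> (s1_add f g) = s1_add (\<phi> f) (\<phi> g))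
     \<and> (\<forall>c. \<forall>f\<in>S1. \<phi> (s1_scale c f) = s1_scale c (\<phi> f))
     \<and> (\<forall>f\<in>S1. \<forall>g\<in>S1. \<phi> (s1_mult f g) = s1_mult (\<phi> f) (\<phi> g))
     \<and> \<phi> s1_one = s1_one"

definition s1_commutative :: "'k::field s1elt set \<Rightarrow> bool" where
  "s1_commutative A \<longleftrightarrow> (\<forall>a\<in>A. \<forall>b\<in>A. s1_mult a b = s1_mult b a)"

definition fold_s1 :: "('k::field s1elt \<Rightarrow> 'k) \<Rightarrow> 'k s1elt set \<Rightarrow> 'k s1elt" where
  "fold_s1 a B = (\<lambda>p. \<Sum>b\<in>B. a b * b p)"

definition s1_spans :: "'k::field s1elt set \<Rightarrow> 'k s1elt set \<Rightarrow> bool" where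
  "s1_spans B A \<longleftrightarrow> (\<forall>v\<in>A. \<exists>a. v = fold_s1 a B)"

definition s1_lin_indep :: "'k::field s1elt set \<Rightarrow> bool" where
  "s1_lin_indep B \<longleftrightarrow> (\<forall>a. fold_s1 a B = s1_zero \<longrightarrow> (\<forall>b\<in>B. a b = 0))"

definition s1_fin_dim :: "'k::field s1elt set \<Rightarrow> bool" where
  "s1_fin_dim A \<longleftrightarrow> (\<exists>B. finite B \<and> B \<subseteq> A \<and> s1_spans B A)"

definition s1_has_dim :: "'k::field s1elt set \<Rightarrow> nat \<Rightarrow> bool" where
  "s1_has_dim A d \<longleftrightarrow> (\<exists>B. finite B \<and> card B = d \<and> B \<subseteq> A \<and> s1_spans B A \<and> s1_lin_indep B)"

end

(*
  In S_1 the idempotent e = 1 - xy and the elements x^a e y^b form a system of matrix units, and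
  e s e = s_00 e for every s; hence every nonzero ideal contains e. A non-injective endomorphism
  therefore kills e, so it sends x and y to mutually inverse units. Under S_1 -> K[t, t^-1],
  x |-> t, y |-> t^-1, a unit becomes a monomial, so it multiplies x^n y^n (n large) into a scalar
  multiple of x^m y^n; it then conjugates the idempotent 1 - x^n y^n of rank n into 1 - x^m y^m of
  rank m, and in characteristic zero the trace gives m = n. Thus every unit lies in K + M_n(K)
  for some n, and the image is the commutative subalgebra generated by a unit and its inverse in
  this finite-dimensional algebra. Conversely, for the cyclic permutation matrix c of size d,
  x |-> c + x^d y^d, y |-> c^-1 + x^d y^d is an endomorphism whose image is spanned by the
  d powers of c + x^d y^d.
*)

theory Submission
  imports Defs "HOL-Library.Poly_Mapping" "HOL.Vector_Spaces"
begin

abbreviation lookup where "lookup \<equiv> Poly_Mapping.lookup"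
abbreviation single where "single \<equiv> Poly_Mapping.single"
abbreviation keys where "keys \<equiv> Poly_Mapping.keys"

section \<open>Monoid algebras as polynomial mappings\<close>

lemma poly_mapping_sum_single: "(r :: 'a \<Rightarrow>\<^sub>0 'b::comm_monoid_add) = (\<Sum>k\<in>keys r. single k (lookup r k))"
  by (rule poly_mapping_eqI) (simp add: lookup_sum lookup_single when_def in_keys_iff)

lemma poly_mapping_induct [case_names zero single add]:
  assumes "P 0" "\<And>k v. P (single k v)" "\<And>a b. P a \<Longrightarrow> P b \<Longrightarrow> P (a + b)"
  shows "P (r :: 'a \<Rightarrow>\<^sub>0 'b::comm_monoid_add)"
proof -
  have "P (\<Sum>k\<in>S. single k (lookup r k))" if "finite S" for S
    using that by (induction S rule: finite_induct) (auto intro: assms)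
  then show ?thesis by (subst poly_mapping_sum_single) simp
qed

lemma lookup_mult_keys:
  "lookup (f * g) k = (\<Sum>l\<in>keys f. \<Sum>q\<in>keys g. if k = l + q then lookup f l * lookup g q else 0)"
proof -
  have "lookup (f * g) k = (\<Sum>l. lookup f l * (\<Sum>q. lookup g q when k = l + q))"
    by (rule lookup_mult)
  also have "\<dots> = (\<Sum>l\<in>keys f. lookup f l * (\<Sum>q. lookup g q when k = l + q))"
    by (rule Sum_any.expand_superset) (auto simp: in_keys_iff)
  also have "\<dots> = (\<Sum>l\<in>keys f. lookup f l * (\<Sum>q\<in>keys g. lookup g q when k = l + q))"
    by (intro sum.cong refl arg_cong[where f="\<lambda>x. _ * x"] Sum_any.expand_superset)
       (auto simp: in_keys_iff when_def)
  also have "\<dots> = (\<Sum>l\<in>keys f. \<Sum>q\<in>keys g. if k = l + q then lookup f l * lookup g q else 0)"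
    by (simp add: sum_distrib_left when_def if_distrib cong: if_cong)
  finally show ?thesis .
qed

lemma lookup_mult_single_right:
  "lookup (r * single k c) q = (\<Sum>p\<in>keys r. if q = p + k then lookup r p * c else 0)"
  by (cases "c = 0") (simp_all add: lookup_mult_keys cong: if_cong)

lemma lookup_mult_single_left:
  "lookup (single k c * r) q = (\<Sum>p\<in>keys r. if q = k + p then c * lookup r p else 0)"
  by (cases "c = 0") (simp_all add: lookup_mult_keys cong: if_cong)

definition pm_scale :: "'k::comm_ring_1 \<Rightarrow> ('m::monoid_add \<Rightarrow>\<^sub>0 'k) \<Rightarrow> ('m \<Rightarrow>\<^sub>0 'k)" where
  "pm_scale c r = single 0 c * r"

lemma lookup_pm_scale: "lookup (pm_scale c r) k = c * lookup r k"
  by (simp add: pm_scale_def mult_map_scale_conv_mult[symmetric] map.rep_eq when_def)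

lemma pm_scale_add_right: "pm_scale c (r + s) = pm_scale c r + pm_scale c s"
  by (simp add: pm_scale_def distrib_left)

lemma pm_scale_add_left: "pm_scale (c + d) r = pm_scale c r + pm_scale d r"
  by (simp add: pm_scale_def single_add distrib_right)

lemma pm_scale_pm_scale: "pm_scale c (pm_scale d r) = pm_scale (c * d) r"
  by (simp add: pm_scale_def mult.assoc[symmetric] mult_single)

lemma pm_scale_one [simp]: "pm_scale 1 r = r"
  by (simp add: pm_scale_def)

lemma pm_scale_zero_left [simp]: "pm_scale 0 r = 0"
  by (simp add: pm_scale_def)

lemma pm_scale_zero_right [simp]: "pm_scale c 0 = 0"
  by (simp add: pm_scale_def)

lemma pm_scale_mult_left: "pm_scale c r * s = pm_scale c (r * s)"
  by (simp add: pm_scale_def mult.assoc)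

lemma single_zero_commute:
  "single 0 (c::'k::comm_ring_1) * (r :: 'm::monoid_add \<Rightarrow>\<^sub>0 'k) = r * single 0 c"
  by (induction r rule: poly_mapping_induct)
     (auto simp: mult_single distrib_left distrib_right mult.commute)

lemma pm_scale_mult_right: "r * pm_scale c s = pm_scale c (r * s)"
  unfolding pm_scale_def by (metis mult.assoc single_zero_commute)

lemma pm_scale_sum_left: "pm_scale (sum f S) r = (\<Sum>x\<in>S. pm_scale (f x) r)"
  by (induction S rule: infinite_finite_induct) (simp_all add: pm_scale_add_left)

lemma single_eq_pm_scale: "single p c = pm_scale c (single p 1)"
  by (simp add: pm_scale_def mult_single)

interpretation pm: vector_space "pm_scale :: 'k::field \<Rightarrow> ('m::monoid_add \<Rightarrow>\<^sub>0 'k) \<Rightarrow> _"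
  by unfold_locales (simp_all add: pm_scale_add_right pm_scale_add_left pm_scale_pm_scale)

definition monoid_alg_lift ::
    "('m \<Rightarrow> ('n::monoid_add \<Rightarrow>\<^sub>0 'k::comm_ring_1)) \<Rightarrow> ('m \<Rightarrow>\<^sub>0 'k) \<Rightarrow> ('n \<Rightarrow>\<^sub>0 'k)" where
  "monoid_alg_lift \<psi> r = (\<Sum>p\<in>keys r. pm_scale (lookup r p) (\<psi> p))"

lemma monoid_alg_lift_superset:
  assumes "finite S" "keys r \<subseteq> S"
  shows "monoid_alg_lift \<psi> r = (\<Sum>p\<in>S. pm_scale (lookup r p) (\<psi> p))"
  unfolding monoid_alg_lift_def
  by (rule sum.mono_neutral_left) (use assms in \<open>auto simp: in_keys_iff\<close>)

lemma monoid_alg_lift_add: "monoid_alg_lift \<psi> (r + s) = monoid_alg_lift \<psi> r + monoid_alg_lift \<psi> s"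
proof -
  let ?S = "keys r \<union> keys s"
  have "monoid_alg_lift \<psi> (r + s) = (\<Sum>p\<in>?S. pm_scale (lookup (r + s) p) (\<psi> p))"
    using keys_add[of r s] by (intro monoid_alg_lift_superset) auto
  also have "\<dots> = (\<Sum>p\<in>?S. pm_scale (lookup r p) (\<psi> p)) + (\<Sum>p\<in>?S. pm_scale (lookup s p) (\<psi> p))"
    by (simp add: lookup_add pm_scale_add_left sum.distrib)
  also have "\<dots> = monoid_alg_lift \<psi> r + monoid_alg_lift \<psi> s"
    by (subst (1 2) monoid_alg_lift_superset[of ?S]) auto
  finally show ?thesis .
qed

lemma monoid_alg_lift_single: "monoid_alg_lift \<psi> (single p c) = pm_scale c (\<psi> p)"
  by (simp add: monoid_alg_lift_def)

lemma monoid_alg_lift_pm_scale: "monoid_alg_lift \<psi> (pm_scale c r) = pm_scale c (monoid_alg_lift \<psi> r)"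
proof (induction r rule: poly_mapping_induct)
  case zero then show ?case by (simp add: monoid_alg_lift_def)
next
  case (single k v)
  have "pm_scale c (single k v) = single k (c * v)" by (simp add: pm_scale_def mult_single)
  then show ?case by (simp add: monoid_alg_lift_single pm_scale_pm_scale)
next
  case (add a b) then show ?case by (simp add: pm_scale_add_right monoid_alg_lift_add)
qed

lemma monoid_alg_lift_mult:
  assumes hom: "\<And>p q. \<psi> (p + q) = \<psi> p * \<psi> q"
  shows "monoid_alg_lift \<psi> (r * s) = monoid_alg_lift \<psi> r * monoid_alg_lift \<psi> s"
proof (induction r rule: poly_mapping_induct)
  case zero then show ?case by (simp add: monoid_alg_lift_def)
next
  case (single k v)
  show ?case
  proof (induction s rule: poly_mapping_induct)
    case zero then show ?case by (simp add: monoid_alg_lift_def)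
  next
    case (single l w)
    show ?case
      by (simp add: mult_single monoid_alg_lift_single hom pm_scale_mult_left pm_scale_mult_right
          pm_scale_pm_scale mult.commute)
  next
    case (add a b) then show ?case by (simp add: distrib_left monoid_alg_lift_add)
  qed
next
  case (add a b) then show ?case by (simp add: distrib_right monoid_alg_lift_add)
qed

lemma monoid_alg_lift_one: "\<psi> 0 = 1 \<Longrightarrow> monoid_alg_lift \<psi> 1 = 1"
  by (metis monoid_alg_lift_single pm_scale_one single_one)

section \<open>Units of Laurent polynomials\<close>

lemma lookup_mult_Max_keys:
  fixes a b :: "int \<Rightarrow>\<^sub>0 'k::comm_ring_1"
  assumes "a \<noteq> 0" "b \<noteq> 0"
  shows "lookup (a * b) (Max (keys a) + Max (keys b)) = lookup a (Max (keys a)) * lookup b (Max (keys b))"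
proof -
  let ?Ma = "Max (keys a)" and ?Mb = "Max (keys b)"
  have ma: "?Ma \<in> keys a" "?Mb \<in> keys b" using assms by auto
  have "lookup (a * b) (?Ma + ?Mb) =
      (\<Sum>l\<in>keys a. \<Sum>q\<in>keys b. if l = ?Ma \<and> q = ?Mb then lookup a l * lookup b q else 0)"
    unfolding lookup_mult_keys
  proof (intro sum.cong refl)
    fix l q assume "l \<in> keys a" "q \<in> keys b"
    then have "l \<le> ?Ma" "q \<le> ?Mb" by auto
    then show "(if ?Ma + ?Mb = l + q then lookup a l * lookup b q else 0) =
               (if l = ?Ma \<and> q = ?Mb then lookup a l * lookup b q else 0)" by auto
  qed
  also have "\<dots> = (\<Sum>l\<in>keys a. if l = ?Ma then lookup a ?Ma * lookup b ?Mb else 0)"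
    by (intro sum.cong refl) (use ma in \<open>simp add: sum.delta'\<close>)
  also have "\<dots> = lookup a ?Ma * lookup b ?Mb"
    using ma by (simp add: sum.delta)
  finally show ?thesis .
qed

lemma lookup_mult_Min_keys:
  fixes a b :: "int \<Rightarrow>\<^sub>0 'k::comm_ring_1"
  assumes "a \<noteq> 0" "b \<noteq> 0"
  shows "lookup (a * b) (Min (keys a) + Min (keys b)) = lookup a (Min (keys a)) * lookup b (Min (keys b))"
proof -
  let ?Ma = "Min (keys a)" and ?Mb = "Min (keys b)"
  have ma: "?Ma \<in> keys a" "?Mb \<in> keys b" using assms by auto
  have "lookup (a * b) (?Ma + ?Mb) =
      (\<Sum>l\<in>keys a. \<Sum>q\<in>keys b. if l = ?Ma \<and> q = ?Mb then lookup a l * lookup b q else 0)"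
    unfolding lookup_mult_keys
  proof (intro sum.cong refl)
    fix l q assume "l \<in> keys a" "q \<in> keys b"
    then have "?Ma \<le> l" "?Mb \<le> q" by auto
    then show "(if ?Ma + ?Mb = l + q then lookup a l * lookup b q else 0) =
               (if l = ?Ma \<and> q = ?Mb then lookup a l * lookup b q else 0)" by auto
  qed
  also have "\<dots> = (\<Sum>l\<in>keys a. if l = ?Ma then lookup a ?Ma * lookup b ?Mb else 0)"
    by (intro sum.cong refl) (use ma in \<open>simp add: sum.delta'\<close>)
  also have "\<dots> = lookup a ?Ma * lookup b ?Mb"
    using ma by (simp add: sum.delta)
  finally show ?thesis .
qed

text \<open>The leading and the trailing coefficients of a product are the products of those of the
  factors, so a unit has a single exponent.\<close>

lemma laurent_unit_single:
  fixes a b :: "int \<Rightarrow>\<^sub>0 'k::idom"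
  assumes ab: "a * b = 1"
  shows "\<exists>k c. a = single k c \<and> c \<noteq> 0"
proof -
  have nz: "a \<noteq> 0" "b \<noteq> 0" using ab by auto
  then have ne: "keys a \<noteq> {}" "keys b \<noteq> {}" by auto
  have key_one: "x = 0" if "lookup (1 :: int \<Rightarrow>\<^sub>0 'k) x \<noteq> 0" for x
    using that by (simp add: lookup_one when_def split: if_splits)
  have "lookup a (Max (keys a)) \<noteq> 0" "lookup b (Max (keys b)) \<noteq> 0"
       "lookup a (Min (keys a)) \<noteq> 0" "lookup b (Min (keys b)) \<noteq> 0"
    using ne by (auto simp: in_keys_iff[symmetric])
  then have "Max (keys a) + Max (keys b) = 0" "Min (keys a) + Min (keys b) = 0"
    using lookup_mult_Max_keys[OF nz] lookup_mult_Min_keys[OF nz] ab key_one by auto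
  moreover have "Min (keys a) \<le> Max (keys a)" "Min (keys b) \<le> Max (keys b)" using ne by auto
  ultimately have "Min (keys a) = Max (keys a)" by linarith
  then have keys_a: "keys a = {Max (keys a)}"
    using ne by (metis Max_ge Min_le antisym finite_keys insertI1 singleton_iff subsetI subset_antisym Max_in)
  have "a = single (Max (keys a)) (lookup a (Max (keys a)))"
    by (subst poly_mapping_sum_single) (subst keys_a, simp)
  moreover have "lookup a (Max (keys a)) \<noteq> 0" using ne by (auto simp: in_keys_iff[symmetric])
  ultimately show ?thesis by blast
qed

section \<open>The Jacobson algebra as the monoid algebra of the bicyclic monoid\<close>

text \<open>The bicyclic monoid \<open>\<langle>x, y | yx = 1\<rangle>\<close>, written additively so that its monoid algebra is
  \<open>bicyclic \<Rightarrow>\<^sub>0 'k\<close>; \<open>Bic i j\<close> stands for \<open>x\<^sup>i y\<^sup>j\<close>.\<close>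

datatype bicyclic = Bic nat nat

instantiation bicyclic :: monoid_add
begin

fun plus_bicyclic :: "bicyclic \<Rightarrow> bicyclic \<Rightarrow> bicyclic" where
  "Bic a b + Bic c d = Bic (a + (c - b)) (d + (b - c))"

definition zero_bicyclic :: bicyclic where "0 = Bic 0 0"

instance
proof
  fix x y z :: bicyclic
  show "x + y + z = x + (y + z)"
    by (cases x; cases y; cases z) (simp split: nat_diff_split)
  show "0 + x = x" by (cases x) (simp add: zero_bicyclic_def)
  show "x + 0 = x" by (cases x) (simp add: zero_bicyclic_def)
qed

end

type_synonym 'k jacobson = "bicyclic \<Rightarrow>\<^sub>0 'k"

definition xy :: "nat \<Rightarrow> nat \<Rightarrow> 'k::comm_ring_1 jacobson" where
  "xy i j = single (Bic i j) 1"

abbreviation "gen_x \<equiv> xy (Suc 0) 0"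
abbreviation "gen_y \<equiv> xy 0 (Suc 0)"

lemma xy_mult: "xy i j * xy k l = (xy (i + (k - j)) (l + (j - k)) :: 'k::comm_ring_1 jacobson)"
  by (simp add: xy_def mult_single)

lemma xy_0_0 [simp]: "xy 0 0 = 1"
  by (simp add: xy_def zero_bicyclic_def[symmetric])

lemma gen_x_power: "gen_x ^ i = xy i 0"
  by (induction i) (simp_all add: xy_mult)

lemma gen_y_power: "gen_y ^ j = xy 0 j"
  by (induction j) (simp_all add: xy_mult power_Suc2 del: power_Suc)

lemma xy_eq_powers: "xy i j = gen_x ^ i * gen_y ^ j"
  by (simp add: gen_x_power gen_y_power xy_mult)

lemma gen_y_mult_gen_x: "gen_y * gen_x = 1"
  by (simp add: xy_mult)

lemma lookup_xy: "lookup (xy i j) (Bic a b) = (if a = i \<and> b = j then 1 else 0)"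
  by (simp add: xy_def lookup_single when_def)

lemma single_Bic_eq: "single (Bic i j) c = pm_scale c (xy i j)"
  unfolding xy_def by (rule single_eq_pm_scale)

text \<open>The monoid map \<open>x\<^sup>i y\<^sup>j \<mapsto> t\<^bsup>i - j\<^esup>\<close> induces \<open>S\<^sub>1 \<rightarrow> K[t, t\<^sup>-\<^sup>1]\<close>.\<close>

fun bic_degree :: "bicyclic \<Rightarrow> int" where
  "bic_degree (Bic i j) = int i - int j"

definition to_laurent :: "'k::comm_ring_1 jacobson \<Rightarrow> (int \<Rightarrow>\<^sub>0 'k)" where
  "to_laurent = monoid_alg_lift (\<lambda>p. single (bic_degree p) 1)"

lemma to_laurent_mult: "to_laurent (r * s) = to_laurent r * to_laurent s"
proof -
  have "bic_degree (p + q) = bic_degree p + bic_degree q" for p q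
    by (cases p; cases q) auto
  then show ?thesis
    unfolding to_laurent_def by (intro monoid_alg_lift_mult) (simp add: mult_single)
qed

lemma to_laurent_one: "to_laurent 1 = 1"
  unfolding to_laurent_def by (rule monoid_alg_lift_one) (simp add: zero_bicyclic_def)

lemma lookup_to_laurent:
  "lookup (to_laurent r) d = (\<Sum>p\<in>keys r. if bic_degree p = d then lookup r p else 0)"
  by (simp add: to_laurent_def monoid_alg_lift_def lookup_sum lookup_pm_scale lookup_single
      when_def if_distrib cong: if_cong)

section \<open>Matrix units\<close>

text \<open>\<open>munit a b = x\<^sup>a (1 - xy) y\<^sup>b\<close> multiply like the matrix units \<open>E\<^sub>a\<^sub>b\<close> of
  \<open>\<nat> \<times> \<nat>\<close> matrices; \<open>e00\<close> is \<open>E\<^sub>0\<^sub>0\<close>.\<close>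

definition e00 :: "'k::comm_ring_1 jacobson" where
  "e00 = 1 - gen_x * gen_y"

definition munit :: "nat \<Rightarrow> nat \<Rightarrow> 'k::comm_ring_1 jacobson" where
  "munit a b = xy a 0 * e00 * xy 0 b"

lemma e00_mult_xy:
  assumes "0 < i"
  shows "e00 * xy i j = 0"
proof -
  have "xy i j = gen_x * xy (i - 1) j" using assms by (simp add: xy_mult)
  moreover have "e00 * gen_x = 0" by (simp add: e00_def left_diff_distrib xy_mult)
  ultimately show ?thesis by (metis mult.assoc mult_zero_left)
qed

lemma xy_mult_e00:
  assumes "0 < j"
  shows "xy i j * e00 = 0"
proof -
  have "xy i j = xy i (j - 1) * gen_y" using assms by (simp add: xy_mult)
  moreover have "gen_y * e00 = 0" by (simp add: e00_def right_diff_distrib xy_mult)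
  ultimately show ?thesis by (metis mult.assoc mult_zero_right)
qed

lemma e00_idem: "e00 * e00 = e00"
proof -
  have "e00 * e00 = e00 - e00 * gen_x * gen_y" by (simp add: e00_def right_diff_distrib mult.assoc)
  then show ?thesis by (simp add: e00_mult_xy)
qed

lemma lookup_e00: "lookup e00 (Bic 0 0) = 1"
  by (simp add: e00_def lookup_minus xy_mult lookup_xy xy_0_0[symmetric] del: xy_0_0)

lemma pm_scale_e00_cancel: "pm_scale c e00 = pm_scale c' e00 \<Longrightarrow> c = c'"
  by (metis lookup_pm_scale lookup_e00 mult.right_neutral)

lemma e00_sandwich:
  fixes s :: "'k::comm_ring_1 jacobson"
  shows "e00 * s * e00 = pm_scale (lookup s (Bic 0 0)) e00"
proof (induction s rule: poly_mapping_induct)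
  case zero then show ?case by simp
next
  case (single k v)
  obtain i j where k: "k = Bic i j" by (cases k)
  show ?case
  proof (cases "i = 0 \<and> j = 0")
    case True
    then show ?thesis using k
      by (simp add: single_Bic_eq pm_scale_mult_left pm_scale_mult_right e00_idem lookup_pm_scale
          lookup_xy lookup_one zero_bicyclic_def)
  next
    case False
    then have "e00 * xy i j * e00 = (0 :: 'k jacobson)"
      by (metis e00_mult_xy xy_mult_e00 mult.assoc mult_zero_left mult_zero_right neq0_conv)
    moreover have "lookup (single k v) (Bic 0 0) = 0" using k False by (auto simp: lookup_single)
    ultimately show ?thesis
      using k by (simp add: single_Bic_eq pm_scale_mult_left pm_scale_mult_right)
  qed
next
  case (add a b)
  then show ?case by (simp add: distrib_left distrib_right lookup_add pm_scale_add_left)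
qed

lemma munit_sandwich:
  "munit i j * s * munit k l = pm_scale (lookup (xy 0 j * s * xy k 0) (Bic 0 0)) (munit i l)"
proof -
  have "munit i j * s * munit k l = xy i 0 * (e00 * (xy 0 j * s * xy k 0) * e00) * xy 0 l"
    by (simp add: munit_def mult.assoc)
  then show ?thesis
    by (simp add: e00_sandwich munit_def pm_scale_mult_left pm_scale_mult_right)
qed

lemma munit_mult: "munit a b * munit c d = (if b = c then munit a d else 0)"
  using munit_sandwich[of a b 1 c d] by (auto simp: xy_mult lookup_xy)

lemma munit_0_0: "munit 0 0 = e00"
  by (simp add: munit_def)

lemma munit_eq: "munit a b = xy a b - xy (Suc a) (Suc b)"
  by (simp add: munit_def e00_def right_diff_distrib left_diff_distrib xy_mult)

lemma sum_munit_diag: "(\<Sum>a<n. munit a a) = 1 - xy n n"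
  by (induction n) (simp_all add: munit_eq)

lemma munit_mult_sum_diag: "b < n \<Longrightarrow> munit a b * (\<Sum>c<n. munit c c) = munit a b"
  by (simp add: sum_distrib_left munit_mult)

section \<open>Algebra endomorphisms\<close>

locale alg_hom =
  fixes \<Phi> :: "'k::comm_ring_1 jacobson \<Rightarrow> 'k jacobson"
  assumes hom_add: "\<Phi> (r + s) = \<Phi> r + \<Phi> s"
    and hom_mult: "\<Phi> (r * s) = \<Phi> r * \<Phi> s"
    and hom_one: "\<Phi> 1 = 1"
    and hom_scale: "\<Phi> (pm_scale c r) = pm_scale c (\<Phi> r)"
begin

lemma hom_zero: "\<Phi> 0 = 0"
  using hom_add[of 0 0] by simp

lemma hom_diff: "\<Phi> (r - s) = \<Phi> r - \<Phi> s"
  using hom_add[of "r - s" s] by simp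

lemma hom_power: "\<Phi> (x ^ n) = \<Phi> x ^ n"
  by (induction n) (simp_all add: hom_one hom_mult)

lemma hom_xy: "\<Phi> (xy i j) = \<Phi> gen_x ^ i * \<Phi> gen_y ^ j"
  by (subst xy_eq_powers) (simp only: hom_mult hom_power)

lemma hom_gen_y_gen_x: "\<Phi> gen_y * \<Phi> gen_x = 1"
  by (simp add: hom_mult[symmetric] gen_y_mult_gen_x hom_one)

lemma image_induct:
  assumes one: "P 1" and gens: "P (\<Phi> gen_x)" "P (\<Phi> gen_y)"
    and add_closed: "\<And>x y. P x \<Longrightarrow> P y \<Longrightarrow> P (x + y)"
    and scale_closed: "\<And>c x. P x \<Longrightarrow> P (pm_scale c x)"
    and mult_closed: "\<And>x y. P x \<Longrightarrow> P y \<Longrightarrow> P (x * y)"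
  shows "P (\<Phi> r)"
proof (induction r rule: poly_mapping_induct)
  case zero
  show ?case using scale_closed[OF one, of 0] by (simp add: hom_zero)
next
  case (single p c)
  obtain i j where p: "p = Bic i j" by (cases p)
  have power: "P (x ^ n)" if "P x" for x n
    using that by (induction n) (simp_all add: one mult_closed)
  have "P (\<Phi> gen_x ^ i * \<Phi> gen_y ^ j)"
    by (intro mult_closed power gens)
  then show ?case
    unfolding p single_Bic_eq hom_scale hom_xy[of i j] by (rule scale_closed)
next
  case (add a b)
  then show ?case unfolding hom_add by (rule add_closed)
qed


lemma commute_image:
  assumes "a * \<Phi> gen_x = \<Phi> gen_x * a" "a * \<Phi> gen_y = \<Phi> gen_y * a"
  shows "a * \<Phi> r = \<Phi> r * a"
proof (rule image_induct[where P = "\<lambda>z. a * z = z * a"])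
  fix x y assume "a * x = x * a" "a * y = y * a"
  then show "a * (x + y) = (x + y) * a" "a * (x * y) = x * y * a"
    by (simp_all add: distrib_left distrib_right) (metis mult.assoc)
next
  fix c x assume "a * x = x * a"
  then show "a * pm_scale c x = pm_scale c x * a"
    by (simp add: pm_scale_mult_left pm_scale_mult_right)
qed (use assms in simp_all)

lemma image_commute:
  assumes "\<Phi> gen_x * \<Phi> gen_y = \<Phi> gen_y * \<Phi> gen_x"
  shows "\<Phi> r * \<Phi> s = \<Phi> s * \<Phi> r"
proof -
  have x: "\<Phi> gen_x * \<Phi> r = \<Phi> r * \<Phi> gen_x"
    by (rule commute_image) (use assms in simp_all)
  have y: "\<Phi> gen_y * \<Phi> r = \<Phi> r * \<Phi> gen_y"
    by (rule commute_image) (use assms in simp_all)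
  show ?thesis
    by (rule commute_image) (use x y in simp_all)
qed

end

lemma lookup_xy_mult_mult_xy:
  "lookup (xy a b * t * xy c d) q =
     (\<Sum>p\<in>keys t. if Bic a b + p + Bic c d = q then lookup t p else 0)"
proof -
  have "xy a b * t * xy c d = monoid_alg_lift (\<lambda>p. single (Bic a b + p + Bic c d) 1) t"
  proof (induction t rule: poly_mapping_induct)
    case zero then show ?case by (simp add: monoid_alg_lift_def)
  next
    case (single k v) then show ?case
      by (simp add: xy_def mult_single monoid_alg_lift_single pm_scale_def)
  next
    case (add r s) then show ?case by (simp add: distrib_left distrib_right monoid_alg_lift_add)
  qed
  then show ?thesis
    by (simp add: monoid_alg_lift_def lookup_sum lookup_pm_scale lookup_single when_def
        if_distrib cong: if_cong)
qed

text \<open>Every nonzero two-sided ideal contains \<open>e00\<close>: multiplying \<open>t\<close> by \<open>y\<^sup>l\<close> and \<open>x\<^sup>m\<close>, where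
  \<open>x\<^sup>l y\<^sup>m\<close> is a term of \<open>t\<close> with least \<open>m\<close>, moves that term to the constant term.\<close>

lemma exists_lookup_sandwich_nonzero:
  fixes t :: "'k::comm_ring_1 jacobson"
  assumes "t \<noteq> 0"
  shows "\<exists>l m. lookup (xy 0 l * t * xy m 0) (Bic 0 0) \<noteq> 0"
proof -
  define J where "J = {j. \<exists>i. Bic i j \<in> keys t}"
  have "finite J"
  proof -
    have "J \<subseteq> (\<lambda>p. case p of Bic i j \<Rightarrow> j) ` keys t" unfolding J_def by force
    then show ?thesis by (rule finite_subset) simp
  qed
  moreover obtain p where "p \<in> keys t" using assms by (metis ex_in_conv keys_eq_empty)
  then have "J \<noteq> {}" unfolding J_def by (cases p) auto
  ultimately have "Min J \<in> J" by simp
  then obtain l where l: "Bic l (Min J) \<in> keys t" unfolding J_def by auto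
  have min: "Min J \<le> j" if "Bic i j \<in> keys t" for i j
    using that \<open>finite J\<close> by (intro Min_le) (auto simp: J_def)
  have "lookup (xy 0 l * t * xy (Min J) 0) (Bic 0 0) =
      (\<Sum>p\<in>keys t. if p = Bic l (Min J) then lookup t p else 0)"
    unfolding lookup_xy_mult_mult_xy
  proof (intro sum.cong refl)
    fix p assume "p \<in> keys t"
    moreover obtain i j where "p = Bic i j" by (cases p)
    ultimately show "(if Bic 0 l + p + Bic (Min J) 0 = Bic 0 0 then lookup t p else 0) =
        (if p = Bic l (Min J) then lookup t p else 0)"
      using min by fastforce
  qed
  also have "\<dots> = lookup t (Bic l (Min J))" using l by (simp add: sum.delta')
  finally show ?thesis using l by (metis in_keys_iff)
qed

lemma alg_hom_e00_eq_0_of_not_inj: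
  fixes \<Phi> :: "'k::field jacobson \<Rightarrow> 'k jacobson"
  assumes "alg_hom \<Phi>" and "\<not> inj \<Phi>"
  shows "\<Phi> e00 = 0"
proof -
  interpret alg_hom \<Phi> by fact
  obtain r s where "r \<noteq> s" "\<Phi> r = \<Phi> s" using assms unfolding inj_def by blast
  then have t: "r - s \<noteq> 0" "\<Phi> (r - s) = 0" by (simp_all add: hom_diff)
  then obtain l m where c: "lookup (xy 0 l * (r - s) * xy m 0) (Bic 0 0) \<noteq> 0"
    using exists_lookup_sandwich_nonzero by blast
  have "\<Phi> (e00 * (xy 0 l * (r - s) * xy m 0) * e00) = 0"
    by (simp add: hom_mult t)
  then have "pm_scale (lookup (xy 0 l * (r - s) * xy m 0) (Bic 0 0)) (\<Phi> e00) = 0"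
    by (simp add: e00_sandwich hom_scale)
  then have "pm_scale (inverse (lookup (xy 0 l * (r - s) * xy m 0) (Bic 0 0)))
      (pm_scale (lookup (xy 0 l * (r - s) * xy m 0) (Bic 0 0)) (\<Phi> e00)) = 0"
    by simp
  then show ?thesis using c by (simp add: pm_scale_pm_scale)
qed

lemma (in alg_hom) hom_gen_x_gen_y:
  assumes "\<Phi> e00 = 0"
  shows "\<Phi> gen_x * \<Phi> gen_y = 1"
  using assms by (simp add: e00_def hom_diff hom_one hom_mult)

section \<open>Units\<close>

definition bounded_by :: "'k::zero jacobson \<Rightarrow> nat \<Rightarrow> bool" where
  "bounded_by r n \<longleftrightarrow> (\<forall>i j. Bic i j \<in> keys r \<longrightarrow> i \<le> n \<and> j \<le> n)"

lemma bounded_by_mono: "bounded_by r n \<Longrightarrow> n \<le> m \<Longrightarrow> bounded_by r m"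
  unfolding bounded_by_def by force

lemma bounded_by_exists: "\<exists>n. bounded_by r n"
proof -
  have "finite ((\<lambda>p. case p of Bic i j \<Rightarrow> i + j) ` keys r)" by simp
  then obtain n where "\<forall>x\<in>(\<lambda>p. case p of Bic i j \<Rightarrow> i + j) ` keys r. x \<le> n"
    using finite_nat_set_iff_bounded_le by blast
  then have "bounded_by r n" unfolding bounded_by_def by force
  then show ?thesis ..
qed

lemma lookup_mult_xy_diag:
  assumes "bounded_by r n"
  shows "lookup (r * xy n n) (Bic a b) = (if b = n then lookup (to_laurent r) (int a - int n) else 0)"
proof -
  have "lookup (r * xy n n) (Bic a b) = (\<Sum>p\<in>keys r. if Bic a b = p + Bic n n then lookup r p else 0)"
    by (simp add: lookup_mult_single_right xy_def cong: if_cong)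
  also have "\<dots> = (\<Sum>p\<in>keys r. if b = n then (if bic_degree p = int a - int n then lookup r p else 0) else 0)"
  proof (intro sum.cong refl)
    fix p assume p: "p \<in> keys r"
    obtain i j where pij: "p = Bic i j" by (cases p)
    have "j \<le> n" using assms p pij unfolding bounded_by_def by auto
    then show "(if Bic a b = p + Bic n n then lookup r p else 0) =
        (if b = n then (if bic_degree p = int a - int n then lookup r p else 0) else 0)"
      using pij by auto
  qed
  also have "\<dots> = (if b = n then lookup (to_laurent r) (int a - int n) else 0)"
    by (simp add: lookup_to_laurent)
  finally show ?thesis .
qed

lemma lookup_xy_diag_mult:
  assumes "bounded_by r n"
  shows "lookup (xy n n * r) (Bic a b) = (if a = n then lookup (to_laurent r) (int n - int b) else 0)"
proof -
  have "lookup (xy n n * r) (Bic a b) = (\<Sum>p\<in>keys r. if Bic a b = Bic n n + p then lookup r p else 0)"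
    by (simp add: lookup_mult_single_left xy_def cong: if_cong)
  also have "\<dots> = (\<Sum>p\<in>keys r. if a = n then (if bic_degree p = int n - int b then lookup r p else 0) else 0)"
  proof (intro sum.cong refl)
    fix p assume p: "p \<in> keys r"
    obtain i j where pij: "p = Bic i j" by (cases p)
    have "i \<le> n" using assms p pij unfolding bounded_by_def by auto
    then show "(if Bic a b = Bic n n + p then lookup r p else 0) =
        (if a = n then (if bic_degree p = int n - int b then lookup r p else 0) else 0)"
      using pij by auto
  qed
  also have "\<dots> = (if a = n then lookup (to_laurent r) (int n - int b) else 0)"
    by (simp add: lookup_to_laurent)
  finally show ?thesis .
qed

lemma mult_xy_diag_eq:
  assumes "bounded_by r n" "to_laurent r = single k c" "int m = int n + k"
  shows "r * xy n n = pm_scale c (xy m n)"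
proof (rule poly_mapping_eqI)
  fix q :: bicyclic
  obtain a b where "q = Bic a b" by (cases q)
  then show "lookup (r * xy n n) q = lookup (pm_scale c (xy m n)) q"
    using assms by (auto simp: lookup_mult_xy_diag lookup_pm_scale lookup_xy lookup_single when_def)
qed

lemma xy_diag_mult_eq:
  assumes "bounded_by r n" "to_laurent r = single k c" "int m = int n - k"
  shows "xy n n * r = pm_scale c (xy n m)"
proof (rule poly_mapping_eqI)
  fix q :: bicyclic
  obtain a b where "q = Bic a b" by (cases q)
  then show "lookup (xy n n * r) q = lookup (pm_scale c (xy n m)) q"
    using assms by (auto simp: lookup_xy_diag_mult lookup_pm_scale lookup_xy lookup_single when_def)
qed

lemma card_eq_by_trace:
  fixes \<alpha> \<beta> :: "nat \<Rightarrow> nat \<Rightarrow> 'a::{comm_semiring_1, semiring_char_0}"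
  assumes "\<And>a. a < n \<Longrightarrow> (\<Sum>c<m. \<beta> a c * \<alpha> c a) = 1"
    and "\<And>c. c < m \<Longrightarrow> (\<Sum>a<n. \<alpha> c a * \<beta> a c) = 1"
  shows "n = m"
proof -
  have "(of_nat n :: 'a) = (\<Sum>a<n. \<Sum>c<m. \<beta> a c * \<alpha> c a)" by (simp add: assms(1))
  also have "\<dots> = (\<Sum>c<m. \<Sum>a<n. \<alpha> c a * \<beta> a c)" by (subst sum.swap) (simp add: mult.commute)
  also have "\<dots> = of_nat m" by (simp add: assms(2))
  finally show ?thesis by simp
qed

lemma conjugate_diag_card_eq:
  fixes A B :: "'k::field_char_0 jacobson"
  assumes AB: "A * B = 1" and BA: "B * A = 1"
    and conj: "A * (\<Sum>a<n. munit a a) * B = (\<Sum>c<m. munit c c)"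
  shows "n = m"
proof -
  define \<alpha> where "\<alpha> c a = lookup (xy 0 c * A * xy a 0) (Bic 0 0)" for c a
  define \<beta> where "\<beta> a c = lookup (xy 0 a * B * xy c 0) (Bic 0 0)" for a c
  have idem: "munit c c * (munit c c * z) = munit c c * z" for c and z :: "'k jacobson"
    by (simp add: mult.assoc[symmetric] munit_mult)
  have conj': "B * (\<Sum>c<m. munit c c) * A = (\<Sum>a<n. munit a a)"
    by (simp add: conj[symmetric] mult.assoc[symmetric] BA) (simp add: mult.assoc BA)
  show ?thesis
  proof (rule card_eq_by_trace)
    fix a assume "a < n"
    have "pm_scale (\<Sum>c<m. \<beta> a c * \<alpha> c a) e00 =
        (\<Sum>c<m. (munit 0 a * B * munit c c) * (munit c c * A * munit a 0))"
      by (simp add: pm_scale_sum_left munit_sandwich \<alpha>_def \<beta>_def pm_scale_mult_left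
          pm_scale_mult_right pm_scale_pm_scale munit_mult munit_0_0 mult.commute)
    also have "\<dots> = munit 0 a * (B * (\<Sum>c<m. munit c c) * A) * munit a 0"
      by (simp add: sum_distrib_left sum_distrib_right mult.assoc idem)
    also have "\<dots> = e00"
      using \<open>a < n\<close> by (simp add: conj' munit_mult_sum_diag munit_mult munit_0_0)
    finally show "(\<Sum>c<m. \<beta> a c * \<alpha> c a) = 1"
      by (intro pm_scale_e00_cancel) simp
  next
    fix c assume "c < m"
    have "pm_scale (\<Sum>a<n. \<alpha> c a * \<beta> a c) e00 =
        (\<Sum>a<n. (munit 0 c * A * munit a a) * (munit a a * B * munit c 0))"
      by (simp add: pm_scale_sum_left munit_sandwich \<alpha>_def \<beta>_def pm_scale_mult_left
          pm_scale_mult_right pm_scale_pm_scale munit_mult munit_0_0 mult.commute)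
    also have "\<dots> = munit 0 c * (A * (\<Sum>a<n. munit a a) * B) * munit c 0"
      by (simp add: sum_distrib_left sum_distrib_right mult.assoc idem)
    also have "\<dots> = e00"
      using \<open>c < m\<close> by (simp add: conj munit_mult_sum_diag munit_mult munit_0_0)
    finally show "(\<Sum>a<n. \<alpha> c a * \<beta> a c) = 1"
      by (intro pm_scale_e00_cancel) simp
  qed
qed


lemma unit_to_laurent:
  fixes A B :: "'k::field jacobson"
  assumes AB: "A * B = 1" and BA: "B * A = 1"
  obtains k c c' where "to_laurent A = single k c" "to_laurent B = single (- k) c'" "c * c' = 1"
proof -
  obtain k c where lA: "to_laurent A = single k c"
    using laurent_unit_single[of "to_laurent A" "to_laurent B"] AB
    by (auto simp: to_laurent_mult[symmetric] to_laurent_one)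
  obtain k' c' where lB: "to_laurent B = single k' c'"
    using laurent_unit_single[of "to_laurent B" "to_laurent A"] BA
    by (auto simp: to_laurent_mult[symmetric] to_laurent_one)
  have "single (k' + k) (c' * c) = (1 :: int \<Rightarrow>\<^sub>0 'k)"
    using BA by (metis lA lB mult_single to_laurent_mult to_laurent_one)
  then have "lookup (single (k' + k) (c' * c)) 0 = (1 :: 'k)" by simp
  then have "k' = - k" "c * c' = 1"
    by (auto simp: lookup_single when_def mult.commute split: if_splits)
  with lA lB show ?thesis by (intro that) simp_all
qed

lemma unit_scalar_on_corner:
  fixes A B :: "'k::field_char_0 jacobson"
  assumes AB: "A * B = 1" and BA: "B * A = 1"
  shows "\<exists>c n. A * xy n n = pm_scale c (xy n n) \<and> xy n n * A = pm_scale c (xy n n)"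
proof -
  obtain k c c' where lA: "to_laurent A = single k c" and lB: "to_laurent B = single (- k) c'"
    and cc': "c * c' = 1"
    using unit_to_laurent[OF AB BA] .
  obtain n1 n2 where "bounded_by A n1" "bounded_by B n2" using bounded_by_exists by metis
  define n where "n = max n1 (max n2 (nat \<bar>k\<bar>))"
  have bA: "bounded_by A n" and bB: "bounded_by B n"
    using \<open>bounded_by A n1\<close> \<open>bounded_by B n2\<close> by (simp_all add: n_def bounded_by_mono)
  define m where "m = nat (int n + k)"
  have "\<bar>k\<bar> \<le> int n" unfolding n_def by (simp add: of_nat_max le_max_iff_disj)
  then have m: "int m = int n + k" unfolding m_def by (simp add: abs_le_iff)
  have AQ: "A * xy n n = pm_scale c (xy m n)"
    using bA lA m by (rule mult_xy_diag_eq)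
  have QB: "xy n n * B = pm_scale c' (xy n m)"
    using bB lB by (rule xy_diag_mult_eq) (use m in simp)
  have "A * xy n n * B = (A * xy n n) * (xy n n * B)"
    by (simp add: mult.assoc[symmetric]) (simp add: mult.assoc xy_mult)
  also have "\<dots> = xy m m"
    by (simp add: AQ QB pm_scale_mult_left pm_scale_mult_right pm_scale_pm_scale
        mult.commute[of c' c] cc' xy_mult)
  finally have "A * (\<Sum>a<n. munit a a) * B = (\<Sum>c<m. munit c c)"
    by (simp add: sum_munit_diag left_diff_distrib right_diff_distrib AB)
  then have "n = m" by (rule conjugate_diag_card_eq[OF AB BA])
  then have "xy n n * A = pm_scale c (xy n n)"
    using bA lA m by (intro xy_diag_mult_eq) simp_all
  with AQ \<open>n = m\<close> show ?thesis by blast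
qed

section \<open>Non-injective endomorphisms\<close>

text \<open>\<open>block n\<close> is the corner \<open>(1 - x\<^sup>n y\<^sup>n) S\<^sub>1 (1 - x\<^sup>n y\<^sup>n)\<close>, a copy of the \<open>n \<times> n\<close> matrices
  spanned by the matrix units \<open>munit a b\<close> with \<open>a, b < n\<close>.\<close>

definition block :: "nat \<Rightarrow> 'k::comm_ring_1 jacobson set" where
  "block n = {g. g * xy n n = 0 \<and> xy n n * g = 0}"

definition unital_block :: "nat \<Rightarrow> 'k::comm_ring_1 jacobson set" where
  "unital_block n = {pm_scale c 1 + g | c g. g \<in> block n}"

lemma block_mult: "g \<in> block n \<Longrightarrow> h \<in> block n \<Longrightarrow> g * h \<in> block n"
  by (simp add: block_def mult.assoc) (metis mult.assoc mult_zero_left)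

lemma block_mono:
  assumes g: "g \<in> block n" and "n \<le> n'"
  shows "g \<in> block n'"
proof -
  have "xy n' n' = xy n n * xy n' n'" "xy n' n' = xy n' n' * xy n n"
    using \<open>n \<le> n'\<close> by (simp_all add: xy_mult)
  then have "g * xy n' n' = (g * xy n n) * xy n' n'" "xy n' n' * g = xy n' n' * (xy n n * g)"
    by (metis mult.assoc)+
  then show ?thesis using g by (simp add: block_def)
qed

lemma block_subset_span: "(block n :: 'k::field jacobson set) \<subseteq> pm.span ((\<lambda>(a, b). munit a b) ` ({..<n} \<times> {..<n}))"
proof
  fix g assume g: "g \<in> (block n :: 'k jacobson set)"
  then have "g = (\<Sum>a<n. munit a a) * g * (\<Sum>b<n. munit b b)"
    by (simp add: sum_munit_diag block_def left_diff_distrib right_diff_distrib)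
  also have "\<dots> = (\<Sum>a<n. \<Sum>b<n. pm_scale (lookup (xy 0 a * g * xy b 0) (Bic 0 0)) (munit a b))"
    by (simp add: sum_distrib_left sum_distrib_right munit_sandwich)
       (rule sum.swap)
  also have "\<dots> \<in> pm.span ((\<lambda>(a, b). munit a b) ` ({..<n} \<times> {..<n}))"
    by (intro pm.span_sum pm.span_scale pm.span_base) auto
  finally show "g \<in> pm.span ((\<lambda>(a, b). munit a b) ` ({..<n} \<times> {..<n}))" .
qed

lemma unital_block_finite_span: "\<exists>S. finite S \<and> (unital_block n :: 'k::field jacobson set) \<subseteq> pm.span S"
proof (intro exI conjI subsetI)
  let ?M = "(\<lambda>(a, b). munit a b) ` ({..<n} \<times> {..<n}) :: 'k jacobson set"
  show "finite (insert 1 ?M)" by simp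
  fix v :: "'k jacobson" assume "v \<in> unital_block n"
  then obtain c g where v: "v = pm_scale c 1 + g" and "g \<in> block n"
    unfolding unital_block_def by blast
  then have "g \<in> pm.span (insert 1 ?M)"
    using block_subset_span pm.span_mono[of ?M "insert 1 ?M"] by blast
  moreover have "pm_scale c 1 \<in> pm.span (insert 1 ?M)"
    by (intro pm.span_scale pm.span_base) simp
  ultimately show "v \<in> pm.span (insert 1 ?M)"
    unfolding v by (rule pm.span_add[rotated])
qed

lemma unital_block_mono: "v \<in> unital_block n \<Longrightarrow> n \<le> n' \<Longrightarrow> v \<in> unital_block n'"
  unfolding unital_block_def using block_mono by blast

lemma unital_block_one: "1 \<in> unital_block n"
  unfolding unital_block_def block_def by (intro CollectI exI[of _ 1] exI[of _ 0]) simp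

lemma unital_block_add:
  assumes "v \<in> unital_block n" "w \<in> unital_block n"
  shows "v + w \<in> unital_block n"
proof -
  obtain c g d h where "v = pm_scale c 1 + g" "w = pm_scale d 1 + h" "g \<in> block n" "h \<in> block n"
    using assms unfolding unital_block_def by blast
  then have "v + w = pm_scale (c + d) 1 + (g + h)" "g + h \<in> block n"
    by (simp_all add: pm_scale_add_left block_def distrib_left distrib_right)
  then show ?thesis unfolding unital_block_def by blast
qed

lemma unital_block_scale:
  assumes "v \<in> unital_block n"
  shows "pm_scale c v \<in> unital_block n"
proof -
  obtain d g where "v = pm_scale d 1 + g" "g \<in> block n"
    using assms unfolding unital_block_def by blast
  then have "pm_scale c v = pm_scale (c * d) 1 + pm_scale c g" "pm_scale c g \<in> block n"
    by (simp_all add: pm_scale_add_right pm_scale_pm_scale block_def pm_scale_mult_left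
        pm_scale_mult_right)
  then show ?thesis unfolding unital_block_def by blast
qed

lemma unital_block_mult:
  assumes "v \<in> unital_block n" "w \<in> unital_block n"
  shows "v * w \<in> unital_block n"
proof -
  obtain c g d h where v: "v = pm_scale c 1 + g" and w: "w = pm_scale d 1 + h"
    and gh: "g \<in> block n" "h \<in> block n"
    using assms unfolding unital_block_def by blast
  have "v * w = pm_scale (c * d) 1 + (pm_scale c h + pm_scale d g + g * h)"
    unfolding v w by (simp add: distrib_left distrib_right pm_scale_mult_left pm_scale_mult_right
        pm_scale_add_right pm_scale_pm_scale mult.commute[of d c] add_ac)
  moreover have "pm_scale c h + pm_scale d g + g * h \<in> block n"
    using gh block_mult[OF gh] unfolding block_def
    by (simp add: distrib_left distrib_right pm_scale_mult_left pm_scale_mult_right)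
  ultimately show ?thesis unfolding unital_block_def by blast
qed

lemma unit_in_unital_block:
  fixes A B :: "'k::field_char_0 jacobson"
  assumes "A * B = 1" "B * A = 1"
  shows "\<exists>n. A \<in> unital_block n"
proof -
  obtain c n where "A * xy n n = pm_scale c (xy n n)" "xy n n * A = pm_scale c (xy n n)"
    using unit_scalar_on_corner[OF assms] by blast
  then have "A - pm_scale c 1 \<in> block n"
    by (simp add: block_def left_diff_distrib right_diff_distrib pm_scale_mult_left pm_scale_mult_right)
  then have "A \<in> unital_block n"
    unfolding unital_block_def by (intro CollectI exI[of _ c] exI[of _ "A - pm_scale c 1"]) simp
  then show ?thesis ..
qed

theorem alg_hom_not_inj_image:
  fixes \<Phi> :: "'k::field_char_0 jacobson \<Rightarrow> 'k jacobson"
  assumes "alg_hom \<Phi>" and "\<not> inj \<Phi>"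
  shows "(\<forall>r s. \<Phi> r * \<Phi> s = \<Phi> s * \<Phi> r) \<and> (\<exists>S. finite S \<and> range \<Phi> \<subseteq> pm.span S)"
proof
  interpret alg_hom \<Phi> by fact
  have AB: "\<Phi> gen_x * \<Phi> gen_y = 1"
    using alg_hom_e00_eq_0_of_not_inj[OF assms] by (rule hom_gen_x_gen_y)
  then have gens: "\<Phi> gen_x * \<Phi> gen_y = \<Phi> gen_y * \<Phi> gen_x"
    by (simp add: hom_gen_y_gen_x)
  show "\<forall>r s. \<Phi> r * \<Phi> s = \<Phi> s * \<Phi> r"
    using image_commute[OF gens] by blast
  obtain n1 where "\<Phi> gen_x \<in> unital_block n1"
    using unit_in_unital_block[OF AB hom_gen_y_gen_x] by blast
  moreover obtain n2 where "\<Phi> gen_y \<in> unital_block n2"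
    using unit_in_unital_block[OF hom_gen_y_gen_x AB] by blast
  ultimately have "\<Phi> gen_x \<in> unital_block (max n1 n2)" "\<Phi> gen_y \<in> unital_block (max n1 n2)"
    using unital_block_mono max.cobounded1 max.cobounded2 by blast+
  then have image: "\<Phi> r \<in> unital_block (max n1 n2)" for r
    using image_induct[where P = "\<lambda>z. z \<in> unital_block (max n1 n2)"]
      unital_block_one unital_block_add unital_block_scale unital_block_mult
    by metis
  obtain S where "finite S" and S: "unital_block (max n1 n2) \<subseteq> (pm.span S :: 'k jacobson set)"
    using unital_block_finite_span by blast
  have "range \<Phi> \<subseteq> pm.span S"
    using image S by blast
  with \<open>finite S\<close> show "\<exists>S. finite S \<and> range \<Phi> \<subseteq> pm.span S"
    by blast
qed

section \<open>Endomorphisms with image of any finite dimension\<close>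

lemma left_inverse_power_mult_power:
  fixes A B :: "'a::monoid_mult"
  assumes BA: "B * A = 1"
  shows "B ^ j * A ^ k = A ^ (k - j) * B ^ (j - k)"
proof (induction j arbitrary: k)
  case 0 then show ?case by simp
next
  case (Suc j)
  show ?case
  proof (cases k)
    case 0 then show ?thesis by simp
  next
    case (Suc k')
    have "B ^ Suc j * A ^ k = B ^ j * ((B * A) * A ^ k')"
      by (simp only: Suc power_Suc[of A k'] power_Suc2[of B j] mult.assoc)
    also have "\<dots> = A ^ (k' - j) * B ^ (j - k')" by (simp add: BA Suc.IH)
    finally show ?thesis using Suc by simp
  qed
qed

definition bic_subst :: "'k::comm_ring_1 jacobson \<Rightarrow> 'k jacobson \<Rightarrow> 'k jacobson \<Rightarrow> 'k jacobson" where
  "bic_subst A B = monoid_alg_lift (\<lambda>p. case p of Bic i j \<Rightarrow> A ^ i * B ^ j)"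

lemma bic_subst_single: "bic_subst A B (single (Bic i j) c) = pm_scale c (A ^ i * B ^ j)"
  by (simp add: bic_subst_def monoid_alg_lift_single)

lemma alg_hom_bic_subst:
  assumes BA: "B * A = 1"
  shows "alg_hom (bic_subst A B)"
proof -
  have hom: "(case p + q of Bic i j \<Rightarrow> A ^ i * B ^ j) =
      (case p of Bic i j \<Rightarrow> A ^ i * B ^ j) * (case q of Bic i j \<Rightarrow> A ^ i * B ^ j)" for p q
  proof -
    obtain i j k l where p: "p = Bic i j" and q: "q = Bic k l" by (cases p, cases q)
    have "A ^ i * (B ^ j * A ^ k) * B ^ l = A ^ i * A ^ (k - j) * (B ^ (j - k) * B ^ l)"
      by (simp add: left_inverse_power_mult_power[OF BA] mult.assoc)
    then show ?thesis by (simp add: p q power_add add.commute[of l] mult.assoc)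
  qed
  show ?thesis
    unfolding bic_subst_def
    by unfold_locales
       (simp_all add: monoid_alg_lift_add monoid_alg_lift_mult[OF hom] monoid_alg_lift_one
         monoid_alg_lift_pm_scale zero_bicyclic_def)
qed

lemma range_bic_subst_subset:
  fixes A B :: "'k::field jacobson"
  assumes "\<And>i j. A ^ i * B ^ j \<in> S"
  shows "range (bic_subst A B) \<subseteq> pm.span S"
proof
  fix v assume "v \<in> range (bic_subst A B)"
  then obtain r where "v = bic_subst A B r" by blast
  moreover have "(case p of Bic i j \<Rightarrow> A ^ i * B ^ j) \<in> S" for p
    using assms by (cases p) simp
  ultimately show "v \<in> pm.span S"
    unfolding bic_subst_def monoid_alg_lift_def by (auto intro: pm.span_sum pm.span_scale pm.span_base)
qed

text \<open>\<open>cyclic_shift d m\<close> is the \<open>m\<close>-th power of the cyclic permutation matrix on the first \<open>d\<close>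
  basis vectors, completed by the identity \<open>x\<^sup>d y\<^sup>d\<close> on the rest.\<close>

definition cyclic_shift :: "nat \<Rightarrow> nat \<Rightarrow> 'k::comm_ring_1 jacobson" where
  "cyclic_shift d m = (\<Sum>i<d. munit ((i + m) mod d) i) + xy d d"

lemma xy_diag_mult_munit: "a < d \<Longrightarrow> xy d d * munit a b = 0"
  by (simp add: munit_def mult.assoc[symmetric] xy_mult xy_mult_e00)

lemma munit_mult_xy_diag: "b < d \<Longrightarrow> munit a b * xy d d = 0"
  by (simp add: munit_def mult.assoc xy_mult e00_mult_xy)

lemma cyclic_shift_mult:
  assumes "0 < d"
  shows "cyclic_shift d m * cyclic_shift d m' = cyclic_shift d (m + m')"
proof -
  let ?S = "\<lambda>k. (\<Sum>i<d. munit ((i + k) mod d) i)"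
  have "?S m * ?S m' = (\<Sum>j<d. \<Sum>i<d. munit ((i + m) mod d) i * munit ((j + m') mod d) j)"
    by (simp add: sum_distrib_left sum_distrib_right)
  also have "\<dots> = (\<Sum>j<d. munit (((j + m') mod d + m) mod d) j)"
    using assms by (simp add: munit_mult sum.delta)
  also have "\<dots> = ?S (m + m')"
    by (intro sum.cong refl) (simp add: mod_add_left_eq add.assoc add.commute[of m m'])
  finally have SS: "?S m * ?S m' = ?S (m + m')" .
  have SQ: "?S k * xy d d = 0" and QS: "xy d d * ?S k = 0" for k
    using assms by (simp_all add: sum_distrib_left sum_distrib_right munit_mult_xy_diag xy_diag_mult_munit)
  show ?thesis
    unfolding cyclic_shift_def distrib_left distrib_right SS SQ QS by (simp add: xy_mult)
qed

lemma cyclic_shift_0: "0 < d \<Longrightarrow> cyclic_shift d 0 = 1"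
  by (simp add: cyclic_shift_def sum_munit_diag)

lemma cyclic_shift_mod: "cyclic_shift d m = cyclic_shift d (m mod d)"
  unfolding cyclic_shift_def by (simp add: mod_add_right_eq)

lemma cyclic_shift_power: "0 < d \<Longrightarrow> cyclic_shift d m ^ k = cyclic_shift d (m * k)"
  by (induction k) (simp_all add: cyclic_shift_0 cyclic_shift_mult[symmetric] mult.commute)

lemma lookup_cyclic_shift:
  assumes "m < d" "m' < d"
  shows "lookup (cyclic_shift d m') (Bic m 0) = (if m = m' then 1 else 0)"
proof -
  have "lookup (cyclic_shift d m') (Bic m 0) = (\<Sum>i<d. if m = (i + m') mod d \<and> i = 0 then 1 else 0)"
    using assms by (simp add: cyclic_shift_def lookup_add lookup_sum munit_eq lookup_minus lookup_xy
        cong: if_cong)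
  also have "\<dots> = (\<Sum>i<d. if i = 0 then (if m' mod d = m then 1 else 0) else 0)"
    by (intro sum.cong refl) auto
  also have "\<dots> = (if m = m' then 1 else 0)" using assms by (simp add: sum.delta')
  finally show ?thesis .
qed

theorem exists_alg_hom_image_dim:
  assumes "0 < d"
  shows "\<exists>(\<Phi> :: 'k::field jacobson \<Rightarrow> 'k jacobson) Bs. alg_hom \<Phi> \<and> finite Bs \<and> card Bs = d \<and>
     Bs \<subseteq> range \<Phi> \<and> range \<Phi> \<subseteq> pm.span Bs \<and> pm.independent Bs"
proof (intro exI conjI)
  define A where "A = (cyclic_shift d 1 :: 'k jacobson)"
  define B where "B = (cyclic_shift d (d - 1) :: 'k jacobson)"
  define Bs where "Bs = (cyclic_shift d ` {..<d} :: 'k jacobson set)"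
  have "B * A = 1"
    using assms by (simp add: A_def B_def cyclic_shift_mult cyclic_shift_mod[of d d] cyclic_shift_0)
  then show hom: "alg_hom (bic_subst A B)" by (rule alg_hom_bic_subst)
  have power: "A ^ i * B ^ j = cyclic_shift d ((i + (d - 1) * j) mod d)" for i j
    using assms unfolding A_def B_def
    by (simp add: cyclic_shift_power cyclic_shift_mult mult.commute flip: cyclic_shift_mod)
  have inj: "inj_on (cyclic_shift d :: nat \<Rightarrow> 'k jacobson) {..<d}"
  proof (rule inj_onI)
    fix m m' assume m: "m \<in> {..<d}" "m' \<in> {..<d}"
      and "(cyclic_shift d m :: 'k jacobson) = cyclic_shift d m'"
    then have "lookup (cyclic_shift d m :: 'k jacobson) (Bic m 0) = lookup (cyclic_shift d m') (Bic m 0)"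
      by simp
    then show "m = m'"
      using m by (simp add: lookup_cyclic_shift split: if_splits)
  qed
  show "finite Bs" by (simp add: Bs_def)
  show "card Bs = d" by (simp add: Bs_def card_image[OF inj])
  show "Bs \<subseteq> range (bic_subst A B)"
  proof
    fix b assume "b \<in> Bs"
    then obtain m where "m < d" "b = cyclic_shift d m" by (auto simp: Bs_def)
    then have "bic_subst A B (single (Bic m 0) 1) = b"
      using power[of m 0] by (simp add: bic_subst_single)
    then show "b \<in> range (bic_subst A B)" by (metis rangeI)
  qed
  show "range (bic_subst A B) \<subseteq> pm.span Bs"
    using assms by (intro range_bic_subst_subset) (simp add: power Bs_def)
  show "pm.independent Bs"
    unfolding pm.dependent_finite[OF \<open>finite Bs\<close>]
  proof clarify
    fix u b assume rel: "(\<Sum>v\<in>Bs. pm_scale (u v) v) = 0" and "b \<in> Bs" "u b \<noteq> 0"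
    then obtain m where m: "m < d" "b = cyclic_shift d m" by (auto simp: Bs_def)
    have "0 = lookup (\<Sum>m'<d. pm_scale (u (cyclic_shift d m')) (cyclic_shift d m')) (Bic m 0)"
      using rel by (simp add: Bs_def sum.reindex[OF inj])
    also have "\<dots> = (\<Sum>m'<d. if m = m' then u (cyclic_shift d m') else 0)"
      unfolding lookup_sum lookup_pm_scale by (intro sum.cong refl) (simp add: lookup_cyclic_shift m)
    also have "\<dots> = u b" using m by simp
    finally show False using \<open>u b \<noteq> 0\<close> by simp
  qed
qed

section \<open>Transfer to the concrete model of \<open>S\<^sub>1\<close>\<close>

fun pair_of_bic :: "bicyclic \<Rightarrow> nat \<times> nat" where
  "pair_of_bic (Bic i j) = (i, j)"

lemma Bic_pair_of_bic [simp]: "case_prod Bic (pair_of_bic b) = b"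
  by (cases b) simp

lemma pair_of_bic_Bic [simp]: "pair_of_bic (case_prod Bic p) = p"
  by (cases p) simp

definition s1_of_pm :: "'k::field jacobson \<Rightarrow> 'k s1elt" where
  "s1_of_pm r = (\<lambda>p. lookup r (case_prod Bic p))"

definition pm_of_s1 :: "'k::field s1elt \<Rightarrow> 'k jacobson" where
  "pm_of_s1 f = Abs_poly_mapping (\<lambda>b. f (pair_of_bic b))"

lemma s1_of_pm_pair_of_bic [simp]: "s1_of_pm r (pair_of_bic b) = lookup r b"
  by (simp add: s1_of_pm_def)

lemma supp1_s1_of_pm: "supp1 (s1_of_pm r) = pair_of_bic ` keys r"
proof (intro set_eqI iffI)
  fix p assume "p \<in> supp1 (s1_of_pm r)"
  then have "case_prod Bic p \<in> keys r" by (simp add: supp1_def s1_of_pm_def in_keys_iff)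
  then show "p \<in> pair_of_bic ` keys r" by (metis image_eqI pair_of_bic_Bic)
next
  fix p assume "p \<in> pair_of_bic ` keys r"
  then show "p \<in> supp1 (s1_of_pm r)" by (auto simp: supp1_def s1_of_pm_def in_keys_iff)
qed

lemma s1_of_pm_in_S1: "s1_of_pm r \<in> S1"
  by (simp add: S1_def supp1_s1_of_pm)

lemma lookup_pm_of_s1:
  assumes "f \<in> S1"
  shows "lookup (pm_of_s1 f) b = f (pair_of_bic b)"
proof -
  have "{b. f (pair_of_bic b) \<noteq> 0} \<subseteq> case_prod Bic ` supp1 f"
  proof
    fix b assume "b \<in> {b. f (pair_of_bic b) \<noteq> 0}"
    then have "pair_of_bic b \<in> supp1 f" by (simp add: supp1_def)
    then show "b \<in> case_prod Bic ` supp1 f" by (metis Bic_pair_of_bic image_eqI)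
  qed
  then have "finite {b. f (pair_of_bic b) \<noteq> 0}"
    using assms by (auto simp: S1_def intro: finite_subset)
  then show ?thesis by (simp add: pm_of_s1_def)
qed

lemma s1_of_pm_pm_of_s1: "f \<in> S1 \<Longrightarrow> s1_of_pm (pm_of_s1 f) = f"
  by (simp add: s1_of_pm_def lookup_pm_of_s1)

lemma pm_of_s1_s1_of_pm [simp]: "pm_of_s1 (s1_of_pm r) = r"
  by (rule poly_mapping_eqI) (simp add: lookup_pm_of_s1 s1_of_pm_in_S1)

lemma S1_eq_range_s1_of_pm: "(S1 :: 'k::field s1elt set) = range s1_of_pm"
proof (intro subset_antisym subsetI)
  fix f :: "'k s1elt" assume "f \<in> S1"
  then show "f \<in> range s1_of_pm" by (metis rangeI s1_of_pm_pm_of_s1)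
qed (auto simp: s1_of_pm_in_S1)

lemma inj_s1_of_pm: "inj s1_of_pm"
  by (metis injI pm_of_s1_s1_of_pm)

lemma s1_of_pm_add: "s1_of_pm (r + s) = s1_add (s1_of_pm r) (s1_of_pm s)"
  by (simp add: s1_of_pm_def s1_add_def lookup_add)

lemma s1_of_pm_pm_scale: "s1_of_pm (pm_scale c r) = s1_scale c (s1_of_pm r)"
  by (simp add: s1_of_pm_def s1_scale_def lookup_pm_scale)

lemma s1_of_pm_zero: "s1_of_pm 0 = s1_zero"
  by (simp add: s1_of_pm_def s1_zero_def)

lemma s1_of_pm_one: "s1_of_pm 1 = s1_one"
  by (auto simp: s1_of_pm_def s1_one_def lookup_one when_def zero_bicyclic_def)

lemma s1_of_pm_mult: "s1_of_pm (r * s) = s1_mult (s1_of_pm r) (s1_of_pm s)"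
proof
  fix q
  have inj: "inj_on pair_of_bic A" for A by (metis Bic_pair_of_bic inj_onI)
  have "s1_mult (s1_of_pm r) (s1_of_pm s) q = (\<Sum>p\<in>pair_of_bic ` keys r.
      \<Sum>p'\<in>pair_of_bic ` keys s. if bmul p p' = q then s1_of_pm r p * s1_of_pm s p' else 0)"
    by (simp only: s1_mult_def supp1_s1_of_pm)
  also have "\<dots> = (\<Sum>l\<in>keys r. \<Sum>l'\<in>keys s. if bmul (pair_of_bic l) (pair_of_bic l') = q
      then lookup r l * lookup s l' else 0)"
    by (simp add: sum.reindex[OF inj] cong: if_cong)
  also have "\<dots> = (\<Sum>l\<in>keys r. \<Sum>l'\<in>keys s. if case_prod Bic q = l + l'
      then lookup r l * lookup s l' else 0)"
  proof (intro sum.cong refl)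
    fix l l' :: bicyclic
    have "bmul (pair_of_bic l) (pair_of_bic l') = q \<longleftrightarrow> case_prod Bic q = l + l'"
      by (cases l; cases l'; cases q) (auto simp: bmul_def)
    then show "(if bmul (pair_of_bic l) (pair_of_bic l') = q then lookup r l * lookup s l' else 0) =
        (if case_prod Bic q = l + l' then lookup r l * lookup s l' else 0)" by simp
  qed
  also have "\<dots> = s1_of_pm (r * s) q" by (simp add: s1_of_pm_def lookup_mult_keys)
  finally show "s1_of_pm (r * s) q = s1_mult (s1_of_pm r) (s1_of_pm s) q" by simp
qed

definition pm_endo :: "('k::field s1elt \<Rightarrow> 'k s1elt) \<Rightarrow> 'k jacobson \<Rightarrow> 'k jacobson" where
  "pm_endo \<phi> r = pm_of_s1 (\<phi> (s1_of_pm r))"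

definition s1_endo_of :: "('k::field jacobson \<Rightarrow> 'k jacobson) \<Rightarrow> 'k s1elt \<Rightarrow> 'k s1elt" where
  "s1_endo_of \<Phi> f = s1_of_pm (\<Phi> (pm_of_s1 f))"

lemma s1_of_pm_pm_endo:
  assumes "s1_endo \<phi>"
  shows "s1_of_pm (pm_endo \<phi> r) = \<phi> (s1_of_pm r)"
proof -
  have "\<phi> (s1_of_pm r) \<in> S1"
    using assms s1_of_pm_in_S1 unfolding s1_endo_def by blast
  then show ?thesis by (simp add: pm_endo_def s1_of_pm_pm_of_s1)
qed

lemma s1_endo_imp_alg_hom:
  assumes "s1_endo \<phi>"
  shows "alg_hom (pm_endo \<phi>)"
proof -
  have transfer: "pm_endo \<phi> r = t \<longleftrightarrow> \<phi> (s1_of_pm r) = s1_of_pm t" for r t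
    by (metis s1_of_pm_pm_endo[OF assms] pm_of_s1_s1_of_pm)
  show ?thesis
    using assms
    by unfold_locales
       (simp_all add: transfer s1_of_pm_pm_endo s1_endo_def s1_of_pm_add s1_of_pm_mult s1_of_pm_one
         s1_of_pm_pm_scale s1_of_pm_in_S1)
qed

lemma image_s1_endo:
  assumes "s1_endo \<phi>"
  shows "\<phi> ` S1 = s1_of_pm ` range (pm_endo \<phi>)"
  by (simp add: S1_eq_range_s1_of_pm image_image s1_of_pm_pm_endo[OF assms])

lemma inj_on_s1_endo:
  assumes "inj (pm_endo \<phi>)"
  shows "inj_on \<phi> S1"
proof (rule inj_onI)
  fix f g assume "f \<in> S1" "g \<in> S1" "\<phi> f = \<phi> g"
  then obtain r r' where "f = s1_of_pm r" "g = s1_of_pm r'" "pm_endo \<phi> r = pm_endo \<phi> r'"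
    unfolding S1_eq_range_s1_of_pm pm_endo_def by auto
  then show "f = g" using assms by (simp add: inj_eq)
qed

lemma s1_endo_of_s1_of_pm [simp]: "s1_endo_of \<Phi> (s1_of_pm r) = s1_of_pm (\<Phi> r)"
  by (simp add: s1_endo_of_def)

lemma alg_hom_imp_s1_endo:
  assumes "alg_hom \<Phi>"
  shows "s1_endo (s1_endo_of \<Phi>)"
proof -
  interpret alg_hom \<Phi> by fact
  show ?thesis
    unfolding s1_endo_def S1_eq_range_s1_of_pm
    by (simp add: s1_of_pm_add[symmetric] s1_of_pm_mult[symmetric] s1_of_pm_pm_scale[symmetric]
        s1_of_pm_one[symmetric] hom_add hom_mult hom_one hom_scale image_subset_iff)
qed

lemma image_s1_endo_of: "s1_endo_of \<Phi> ` S1 = s1_of_pm ` range \<Phi>"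
  by (simp add: S1_eq_range_s1_of_pm image_image)

lemma s1_commutative_image:
  assumes "\<And>x y. x \<in> V \<Longrightarrow> y \<in> V \<Longrightarrow> x * y = y * x"
  shows "s1_commutative (s1_of_pm ` V)"
  unfolding s1_commutative_def
proof (intro ballI)
  fix a b assume "a \<in> s1_of_pm ` V" "b \<in> s1_of_pm ` V"
  then obtain x y where "x \<in> V" "y \<in> V" "a = s1_of_pm x" "b = s1_of_pm y" by blast
  then show "s1_mult a b = s1_mult b a" by (metis assms s1_of_pm_mult)
qed

lemma fold_s1_image:
  assumes "finite Bs"
  shows "fold_s1 (\<lambda>b. u (pm_of_s1 b)) (s1_of_pm ` Bs) = s1_of_pm (\<Sum>b\<in>Bs. pm_scale (u b) b)"
proof
  fix p
  have "fold_s1 (\<lambda>b. u (pm_of_s1 b)) (s1_of_pm ` Bs) p = (\<Sum>b\<in>Bs. u b * s1_of_pm b p)"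
    unfolding fold_s1_def by (simp add: sum.reindex inj_on_subset[OF inj_s1_of_pm])
  also have "\<dots> = s1_of_pm (\<Sum>b\<in>Bs. pm_scale (u b) b) p"
    by (simp add: s1_of_pm_def lookup_sum lookup_pm_scale)
  finally show "fold_s1 (\<lambda>b. u (pm_of_s1 b)) (s1_of_pm ` Bs) p = s1_of_pm (\<Sum>b\<in>Bs. pm_scale (u b) b) p" .
qed

lemma s1_spans_image:
  assumes "finite Bs" "V \<subseteq> pm.span Bs"
  shows "s1_spans (s1_of_pm ` Bs) (s1_of_pm ` V)"
  unfolding s1_spans_def
proof
  fix v assume "v \<in> s1_of_pm ` V"
  then obtain x where "x \<in> pm.span Bs" "v = s1_of_pm x" using assms(2) by blast
  then obtain u where "v = s1_of_pm (\<Sum>b\<in>Bs. pm_scale (u b) b)"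
    using pm.span_finite[OF assms(1)] by auto
  then have "v = fold_s1 (\<lambda>b. u (pm_of_s1 b)) (s1_of_pm ` Bs)"
    by (simp add: fold_s1_image assms(1))
  then show "\<exists>a. v = fold_s1 a (s1_of_pm ` Bs)" by blast
qed

lemma s1_fin_dim_image:
  assumes "finite S" "V \<subseteq> pm.span S"
  shows "s1_fin_dim (s1_of_pm ` V)"
proof -
  obtain Bs where Bs: "Bs \<subseteq> V" "pm.independent Bs" "V \<subseteq> pm.span Bs"
    using pm.maximal_independent_subset by blast
  have "Bs \<subseteq> pm.span S" using Bs(1) assms(2) by (rule subset_trans)
  then have "finite Bs" using pm.independent_span_bound[OF assms(1) Bs(2)] by simp
  then show ?thesis
    unfolding s1_fin_dim_def
    by (intro exI[of _ "s1_of_pm ` Bs"] conjI finite_imageI image_mono Bs(1) s1_spans_image Bs(3))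
qed

lemma s1_lin_indep_image:
  assumes "finite Bs" "pm.independent Bs"
  shows "s1_lin_indep (s1_of_pm ` Bs)"
  unfolding s1_lin_indep_def
proof (intro allI impI ballI)
  fix a v assume rel: "fold_s1 a (s1_of_pm ` Bs) = s1_zero" and "v \<in> s1_of_pm ` Bs"
  then obtain b where b: "b \<in> Bs" "v = s1_of_pm b" by blast
  define u where "u b = a (s1_of_pm b)" for b
  have "fold_s1 a (s1_of_pm ` Bs) = fold_s1 (\<lambda>b. u (pm_of_s1 b)) (s1_of_pm ` Bs)"
    unfolding fold_s1_def u_def by (intro ext sum.cong refl) auto
  then have "s1_of_pm (\<Sum>b\<in>Bs. pm_scale (u b) b) = s1_of_pm 0"
    using rel by (simp add: fold_s1_image[OF assms(1)] s1_of_pm_zero)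
  then have "(\<Sum>b\<in>Bs. pm_scale (u b) b) = 0"
    by (metis pm_of_s1_s1_of_pm)
  then have "u b = 0"
    using assms b(1) pm.dependent_finite by blast
  then show "a v = 0" by (simp add: u_def b(2))
qed

lemma s1_has_dim_image:
  assumes "finite Bs" "card Bs = d" "Bs \<subseteq> V" "V \<subseteq> pm.span Bs" "pm.independent Bs"
  shows "s1_has_dim (s1_of_pm ` V) d"
  unfolding s1_has_dim_def
proof (intro exI[of _ "s1_of_pm ` Bs"] conjI)
  show "card (s1_of_pm ` Bs) = d"
    using assms(2) by (simp add: card_image inj_on_subset[OF inj_s1_of_pm])
qed (use assms in \<open>simp_all add: image_mono s1_spans_image s1_lin_indep_image\<close>)

theorem proposition4p7:
  shows "(\<forall>\<phi> :: 'k::field_char_0 s1elt \<Rightarrow> 'k s1elt. s1_endo \<phi> \<longrightarrow>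
            inj_on \<phi> S1 \<or> (s1_commutative (\<phi> ` S1) \<and> s1_fin_dim (\<phi> ` S1)))
       \<and> (\<forall>d::nat. d > 0 \<longrightarrow>
            (\<exists>\<phi> :: 'k s1elt \<Rightarrow> 'k s1elt. s1_endo \<phi> \<and> s1_has_dim (\<phi> ` S1) d))"
proof (intro conjI allI impI)
  fix \<phi> :: "'k s1elt \<Rightarrow> 'k s1elt"
  assume \<phi>: "s1_endo \<phi>"
  show "inj_on \<phi> S1 \<or> (s1_commutative (\<phi> ` S1) \<and> s1_fin_dim (\<phi> ` S1))"
  proof (cases "inj (pm_endo \<phi>)")
    case True
    then show ?thesis by (simp add: inj_on_s1_endo)
  next
    case False
    then obtain S where "\<And>r s. pm_endo \<phi> r * pm_endo \<phi> s = pm_endo \<phi> s * pm_endo \<phi> r"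
      and "finite S" "range (pm_endo \<phi>) \<subseteq> pm.span S"
      using alg_hom_not_inj_image[OF s1_endo_imp_alg_hom[OF \<phi>]] by blast
    then have "s1_commutative (s1_of_pm ` range (pm_endo \<phi>))"
      and "s1_fin_dim (s1_of_pm ` range (pm_endo \<phi>))"
      by (auto intro!: s1_commutative_image s1_fin_dim_image)
    then show ?thesis by (simp add: image_s1_endo[OF \<phi>])
  qed
next
  fix d :: nat
  assume "d > 0"
  then obtain \<Phi> :: "'k jacobson \<Rightarrow> 'k jacobson" and Bs where "alg_hom \<Phi>" and
    "finite Bs" "card Bs = d" "Bs \<subseteq> range \<Phi>" "range \<Phi> \<subseteq> pm.span Bs" "pm.independent Bs"
    using exists_alg_hom_image_dim by blast
  then have "s1_endo (s1_endo_of \<Phi>)" "s1_has_dim (s1_endo_of \<Phi> ` S1) d"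
    by (simp_all add: alg_hom_imp_s1_endo image_s1_endo_of s1_has_dim_image)
  then show "\<exists>\<phi> :: 'k s1elt \<Rightarrow> 'k s1elt. s1_endo \<phi> \<and> s1_has_dim (\<phi> ` S1) d" by blast
qed

end
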